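(* Let $s$ be a state of the transition system $\mathcal{S}_G$ of an event-driven multi-threaded program. If $P$ is a persistent set in $s$ with respect to the standard dependence relation, in which any two $\mathtt{post}$ transitions to the same event queue are dependent, then $P$ is a dependence-covering set in $s$ with respect to a valid dependence relation $D$ (as defined in the context).
   Context: Program model: a program has a finite set of threads, each with an unbounded FIFO event queue. $\mathtt{post}(t_1,e,t_2)$ executed by $t_1$ appends event $e$ to $t_2$'s queue (never blocks). Each thread dequeues the front event of its queue and runs its handler to completion, interleaved with other threads. A state is a triple $s=(l,g,q)$: $l$ is a partial map from threads to local states of their currently executing handlers, $g$ a global state (shared objects, not queues), $q$ maps each thread to the sequence of its pending events. A transition of thread $t$ is one visible operation (accessing an object shared by two threads or two handlers, or the first operation of a handler) followed by invisible operations of $t$ up to the next visible one; it is a deterministic partial function on states. The transition system $\mathcal{S}_G=(\mathcal{S},s_{\mathit{init}},\Delta)$ has $(s,s')\in\Delta$ iff $s'=r(s)$ for a transition $r$; $R$ is the set of transitions. $\mathit{next}(s,t)$ is the next transition of thread $t$ in $s$ and $\mathit{nextTrans}(s)$ the set of all threads' next transitions. Events $e,e'$ on the same thread $t$ may be reordered if some states have $q(t)=e\cdot w\cdot e'\cdot w'$ and $q'(t)=e'\cdot v\cdot e\cdot v'$. Standard dependence relation and persistent sets (Godefroid): the standard dependence relation is a reflexive symmetric relation $D_{std}\subseteq R\times R$ such that whenever $(r_1,r_2)\notin D_{std}$, for all states $s$: if $r_1$ is enabled at $s$ then $r_2$ is enabled at $s$ iff at $r_1(s)$, and if both are enabled at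 $s$ then $r_1(r_2(s))=r_2(r_1(s))$ (full states, including queues); here any two posts to the same event queue are treated as dependent. A set $P$ of transitions enabled at $s$ is persistent in $s$ if for every transition sequence $r_1\cdots r_n$ from $s$ in $\mathcal{S}_G$ with $r_i\notin P$ for all $i$, $r_n$ is independent (w.r.t. $D_{std}$) of every transition in $P$. Event-parallel system $\mathcal{P}_G$: same semantics as $\mathcal{S}_G$ except a thread may remove any event of its queue and spawn a fresh thread running its handler; $ep$ maps each transition of $\mathcal{S}_G$ to the corresponding transition of $\mathcal{P}_G$. A reflexive symmetric $D_P$ on transitions of $\mathcal{P}_G$ is a valid event-parallel dependence relation iff whenever $(r_1,r_2)\notin D_P$, for all states $s$: (i) if $r_1$ is enabled at $s$, then $r_2$ is enabled at $s$ iff at $r_1(s)$; (ii) if both are enabled at $s$ then $r_1(r_2(s))$ and $r_2(r_1(s))$ exist and agree on their local and global components (queues may differ). A reflexive symmetric $D\subseteq R\times R$ is a valid dependence relation iff for some such $D_P$, whenever $(r_1,r_2)\notin D$: if $r_1,r_2$ belong to handlers of two different events $e_1,e_2$ on the same thread then $e_1,e_2$ may be reordered and $(ep(r_1),ep(r_2))\notin D_P$; otherwise (i) and (ii) hold for all states of $\mathcal{S}_G$. (In particular all posts are independent under $D$.) Dependent means $(r_1,r_2)\in D$. Dependence-covering sequence and set (w.r.t. $D$): for $w=r_1\cdots r_n$ and $u=r'_1\cdots r'_m$ from the same state reaching $s_n$ and $s'_m$, with transition sets $R_w,R_u$: $u$ is a dependence-covering sequence of $w$ if $R_w\subseteq R_u$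 and for every dependent pair $r'_i,r'_j\in R_u$ with $i<j$, one holds: (1) both are executed in $w$ in the same relative order; (2) $r'_i$ is executed in $w$ and $r'_j\in\mathit{nextTrans}(s_n)$; (3) $r'_i$ is not executed in $w$, $r'_j\in\mathit{nextTrans}(s_n)$, and $w$ can be extended so that $r'_i$ executes before $r'_j$; (4) $r'_j\notin R_w\cup\mathit{nextTrans}(s_n)$. A non-empty set $L$ of transitions enabled at $s$ is a dependence-covering set in $s$ iff for every non-empty transition sequence $w$ from $s$ there is a dependence-covering sequence $u=r'_1\cdots r'_m$ of $w$ from $s$ with $r'_1\in L$.
   Formalization: The valid dependence relation D is also contained in the standard dependence relation (every pair dependent under D is dependent under it), and the persistent set P is non-empty. The statement above fails without it. *)

theory Defs
  imports Main
begin

text \<open>A state is a triple (l, g, q): l partial map from threads to local states of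
  the currently executing handlers, g the global state, q the event queues.\<close>
type_synonym ('th,'ev,'l,'g) state = "('th \<Rightarrow> 'l option) \<times> 'g \<times> ('th \<Rightarrow> 'ev list)"

definition lg :: "('th,'ev,'l,'g) state \<Rightarrow> ('th \<Rightarrow> 'l option) \<times> 'g" where
  "lg s = (fst s, fst (snd s))"

definition queues :: "('th,'ev,'l,'g) state \<Rightarrow> 'th \<Rightarrow> 'ev list" where
  "queues s = snd (snd s)"

record ('s,'tr) lts =
  lts_init :: 's
  lts_R :: "'tr set"
  lts_app :: "'tr \<Rightarrow> 's \<Rightarrow> 's option"

text \<open>The system S_G of an event-driven program: in addition, the next transition
  of each thread, the thread and the handled event of each transition, and the target
  queue of post transitions (None if the transition is not a post).\<close>
record ('th,'ev,'l,'g,'tr) esys = "(('th,'ev,'l,'g) state, 'tr) lts" +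
  es_next :: "('th,'ev,'l,'g) state \<Rightarrow> 'th \<Rightarrow> 'tr option"
  es_tid :: "'tr \<Rightarrow> 'th"
  es_evt :: "'tr \<Rightarrow> 'ev"
  es_post :: "'tr \<Rightarrow> 'th option"

inductive_set reach :: "('s,'tr,'z) lts_scheme \<Rightarrow> 's set" for T where
  init: "lts_init T \<in> reach T"
| step: "s \<in> reach T \<Longrightarrow> r \<in> lts_R T \<Longrightarrow> lts_app T r s = Some s' \<Longrightarrow> s' \<in> reach T"

fun run :: "('s,'tr,'z) lts_scheme \<Rightarrow> 'tr list \<Rightarrow> 's \<Rightarrow> 's option" where
  "run T [] s = Some s"
| "run T (r # w) s = (if r \<in> lts_R T then
      (case lts_app T r s of None \<Rightarrow> None | Some s' \<Rightarrow> run T w s') else None)"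

definition enabled :: "('s,'tr,'z) lts_scheme \<Rightarrow> 'tr \<Rightarrow> 's \<Rightarrow> bool" where
  "enabled T r s \<longleftrightarrow> r \<in> lts_R T \<and> lts_app T r s \<noteq> None"

definition nextTrans :: "('th,'ev,'l,'g,'tr,'z) esys_scheme \<Rightarrow> ('th,'ev,'l,'g) state \<Rightarrow> 'tr set" where
  "nextTrans G s = {r. \<exists>t. es_next G s t = Some r}"

definition may_reorder :: "('th,'ev,'l,'g,'tr,'z) esys_scheme \<Rightarrow> 'th \<Rightarrow> 'ev \<Rightarrow> 'ev \<Rightarrow> bool" where
  "may_reorder G t e e' \<longleftrightarrow>
     (\<exists>s s' w w' v v'. s \<in> reach G \<and> s' \<in> reach G \<and>
        queues s t = e # w @ e' # w' \<and> queues s' t = e' # v @ e # v')"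

definition std_dep :: "('th,'ev,'l,'g,'tr,'z) esys_scheme \<Rightarrow> ('tr \<times> 'tr) set \<Rightarrow> bool" where
  "std_dep G Dstd \<longleftrightarrow>
     Dstd \<subseteq> lts_R G \<times> lts_R G \<and> refl_on (lts_R G) Dstd \<and> sym Dstd \<and>
     (\<forall>r1\<in>lts_R G. \<forall>r2\<in>lts_R G. (r1, r2) \<notin> Dstd \<longrightarrow>
        (\<forall>s\<in>reach G.
          (enabled G r1 s \<longrightarrow> (enabled G r2 s \<longleftrightarrow> enabled G r2 (the (lts_app G r1 s)))) \<and>
          (enabled G r1 s \<and> enabled G r2 s \<longrightarrow> run G [r2, r1] s = run G [r1, r2] s))) \<and>
     (\<forall>r1\<in>lts_R G. \<forall>r2\<in>lts_R G.
        es_post G r1 \<noteq> None \<and> es_post G r1 = es_post G r2 \<longrightarrow> (r1, r2) \<in> Dstd)"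

definition valid_ep_dep ::
  "(('pth,'ev,'l,'g) state, 'ptr, 'z) lts_scheme \<Rightarrow> ('ptr \<times> 'ptr) set \<Rightarrow> bool" where
  "valid_ep_dep PG DP \<longleftrightarrow>
     DP \<subseteq> lts_R PG \<times> lts_R PG \<and> refl_on (lts_R PG) DP \<and> sym DP \<and>
     (\<forall>r1\<in>lts_R PG. \<forall>r2\<in>lts_R PG. (r1, r2) \<notin> DP \<longrightarrow>
        (\<forall>s\<in>reach PG.
          (enabled PG r1 s \<longrightarrow> (enabled PG r2 s \<longleftrightarrow> enabled PG r2 (the (lts_app PG r1 s)))) \<and>
          (enabled PG r1 s \<and> enabled PG r2 s \<longrightarrow>
             run PG [r2, r1] s \<noteq> None \<and> run PG [r1, r2] s \<noteq> None \<and>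
             lg (the (run PG [r2, r1] s)) = lg (the (run PG [r1, r2] s)))))"

definition valid_dep ::
  "('th,'ev,'l,'g,'tr,'z) esys_scheme \<Rightarrow> (('pth,'ev,'l,'g) state, 'ptr, 'y) lts_scheme \<Rightarrow>
   ('tr \<Rightarrow> 'ptr) \<Rightarrow> ('tr \<times> 'tr) set \<Rightarrow> bool" where
  "valid_dep G PG ep D \<longleftrightarrow>
     D \<subseteq> lts_R G \<times> lts_R G \<and> refl_on (lts_R G) D \<and> sym D \<and>
     (\<exists>DP. valid_ep_dep PG DP \<and>
       (\<forall>r1\<in>lts_R G. \<forall>r2\<in>lts_R G. (r1, r2) \<notin> D \<longrightarrow>
          (if es_tid G r1 = es_tid G r2 \<and> es_evt G r1 \<noteq> es_evt G r2
           then may_reorder G (es_tid G r1) (es_evt G r1) (es_evt G r2) \<and> (ep r1, ep r2) \<notin> DP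
           else (\<forall>s\<in>reach G.
             (enabled G r1 s \<longrightarrow> (enabled G r2 s \<longleftrightarrow> enabled G r2 (the (lts_app G r1 s)))) \<and>
             (enabled G r1 s \<and> enabled G r2 s \<longrightarrow>
                run G [r2, r1] s \<noteq> None \<and> run G [r1, r2] s \<noteq> None \<and>
                lg (the (run G [r2, r1] s)) = lg (the (run G [r1, r2] s)))))))"

definition persistent ::
  "('th,'ev,'l,'g,'tr,'z) esys_scheme \<Rightarrow> ('tr \<times> 'tr) set \<Rightarrow> 'tr set \<Rightarrow> ('th,'ev,'l,'g) state \<Rightarrow> bool" where
  "persistent G Dstd P s \<longleftrightarrow>
     (\<forall>r\<in>P. enabled G r s) \<and>
     (\<forall>w. w \<noteq> [] \<longrightarrow> run G w s \<noteq> None \<longrightarrow> set w \<inter> P = {} \<longrightarrow>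
        (\<forall>p\<in>P. (last w, p) \<notin> Dstd))"

definition dep_cov_seq ::
  "('th,'ev,'l,'g,'tr,'z) esys_scheme \<Rightarrow> ('tr \<times> 'tr) set \<Rightarrow> ('th,'ev,'l,'g) state \<Rightarrow>
   'tr list \<Rightarrow> 'tr list \<Rightarrow> bool" where
  "dep_cov_seq G D s w u \<longleftrightarrow>
     (\<exists>sn sm. run G w s = Some sn \<and> run G u s = Some sm \<and> set w \<subseteq> set u \<and>
       (\<forall>i j. i < j \<and> j < length u \<and> (u ! i, u ! j) \<in> D \<longrightarrow>
          (\<exists>i' j'. i' < j' \<and> j' < length w \<and> w ! i' = u ! i \<and> w ! j' = u ! j)
        \<or> (u ! i \<in> set w \<and> u ! j \<in> nextTrans G sn)
        \<or> (u ! i \<notin> set w \<and> u ! j \<in> nextTrans G sn \<and>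
             (\<exists>v1 v2. run G (w @ v1 @ [u ! i] @ v2 @ [u ! j]) s \<noteq> None))
        \<or> (u ! j \<notin> set w \<union> nextTrans G sn)))"

definition dep_cov_set ::
  "('th,'ev,'l,'g,'tr,'z) esys_scheme \<Rightarrow> ('tr \<times> 'tr) set \<Rightarrow> 'tr set \<Rightarrow> ('th,'ev,'l,'g) state \<Rightarrow> bool" where
  "dep_cov_set G D L s \<longleftrightarrow>
     L \<noteq> {} \<and> (\<forall>r\<in>L. enabled G r s) \<and>
     (\<forall>w. w \<noteq> [] \<longrightarrow> run G w s \<noteq> None \<longrightarrow>
        (\<exists>u. u \<noteq> [] \<and> dep_cov_seq G D s w u \<and> hd u \<in> L))"

end

theory Submission
  imports Defs "HOL-Library.Sublist"
begin

text \<open>Let \<open>w\<close> be a run from \<open>s\<close>. If \<open>w\<close> contains a transition of \<open>P\<close>, let \<open>p\<close> be the first one;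
  otherwise pick any \<open>p \<in> P\<close>. By persistence every transition preceding \<open>p\<close> in \<open>w\<close> (all of \<open>w\<close>
  in the second case) is independent of \<open>p\<close> with respect to the standard dependence relation,
  so \<open>p\<close> can be moved to the front (respectively prepended) without affecting executability.
  The resulting run \<open>u\<close> starts in \<open>P\<close>, and since \<open>D \<subseteq> Dstd\<close> every \<open>D\<close>-dependent pair of \<open>u\<close>
  occurs in \<open>w\<close> in the same order. Of \<open>D\<close> only the inclusion \<open>D \<subseteq> Dstd\<close> is used.\<close>

lemma run_append:
  "run T (w @ v) s = (case run T w s of None \<Rightarrow> None | Some s' \<Rightarrow> run T v s')"
  by (induction w arbitrary: s) (auto split: option.splits)

lemma run_append_prefix: "run T (w @ v) s \<noteq> None \<Longrightarrow> run T w s \<noteq> None"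
  by (auto simp: run_append split: option.splits)

lemma subseq_pair_conv_nth:
  "subseq [a, b] ys \<longleftrightarrow> (\<exists>i j. i < j \<and> j < length ys \<and> ys ! i = a \<and> ys ! j = b)"
proof
  assume "subseq [a, b] ys"
  then obtain us vs where ys: "ys = us @ a # vs" and "subseq [b] vs"
    by (auto dest: list_emb_ConsD)
  then obtain k where "k < length vs" "vs ! k = b"
    by (auto simp: subseq_singleton_left in_set_conv_nth)
  then have "length us < Suc (length us + k) \<and> Suc (length us + k) < length ys \<and>
      ys ! length us = a \<and> ys ! Suc (length us + k) = b"
    by (simp add: ys nth_append)
  then show "\<exists>i j. i < j \<and> j < length ys \<and> ys ! i = a \<and> ys ! j = b" by blast
next
  assume "\<exists>i j. i < j \<and> j < length ys \<and> ys ! i = a \<and> ys ! j = b"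
  then obtain i j where ij: "i < j" "j < length ys" and "ys ! i = a" "ys ! j = b" by blast
  then have ys: "ys = take i ys @ a # drop (Suc i) ys"
    by (metis id_take_nth_drop order.strict_trans)
  have "drop (Suc i) ys ! (j - Suc i) = b" "j - Suc i < length (drop (Suc i) ys)"
    using ij \<open>ys ! j = b\<close> by auto
  then have "b \<in> set (drop (Suc i) ys)" by (metis nth_mem)
  then have "subseq [a, b] (a # drop (Suc i) ys)" by (simp add: subseq_singleton_left)
  then show "subseq [a, b] ys" by (subst ys) (rule subseq_drop_many)
qed

lemma subseq_nth_pair:
  "i < j \<Longrightarrow> j < length xs \<Longrightarrow> subseq [xs ! i, xs ! j] xs"
  by (auto simp: subseq_pair_conv_nth)

lemma subseq_dependent_pair_Cons:
  assumes "subseq v w"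
    and "\<forall>x\<in>set v. (p, x) \<in> D \<longrightarrow> subseq [p, x] w"
    and "i < j" "j < length (p # v)" "((p # v) ! i, (p # v) ! j) \<in> D"
  shows "subseq [(p # v) ! i, (p # v) ! j] w"
proof (cases i)
  case 0
  have "(p # v) ! j \<in> set v" using assms(3,4) by (auto simp: nth_Cons')
  then show ?thesis using assms(2,5) 0 by simp
next
  case (Suc i')
  then obtain j' where j: "j = Suc j'" using assms(3) by (cases j) auto
  have "subseq [v ! i', v ! j'] v" using assms(3,4) Suc j by (intro subseq_nth_pair) auto
  then show ?thesis using assms(1) Suc j by (auto intro: subseq_order.trans)
qed

lemma std_dep_run_Cons_eq_run_snoc:
  assumes "std_dep G Dstd" and "s \<in> reach G" and "enabled G p s"
    and "\<forall>x\<in>set w. (x, p) \<notin> Dstd" and "run G w s \<noteq> None"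
  shows "run G (p # w) s = run G (w @ [p]) s \<and> run G (w @ [p]) s \<noteq> None"
  using assms(2-)
proof (induction w arbitrary: s)
  case Nil
  then show ?case by (auto simp: enabled_def split: option.splits)
next
  case (Cons x w)
  from Cons.prems obtain s' where xR: "x \<in> lts_R G" and s': "lts_app G x s = Some s'"
    and "run G w s' \<noteq> None"
    by (auto split: if_splits option.splits)
  have pR: "p \<in> lts_R G" and "enabled G x s"
    using Cons.prems(2) xR s' by (auto simp: enabled_def)
  have "(x, p) \<notin> Dstd" using Cons.prems(3) by simp
  then have "enabled G p s \<longleftrightarrow> enabled G p s'" and swap: "run G [p, x] s = run G [x, p] s"
    using assms(1) xR pR Cons.prems(1,2) \<open>enabled G x s\<close> s' unfolding std_dep_def by auto
  then have "enabled G p s'" using Cons.prems(2) by simp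
  moreover have "s' \<in> reach G" using Cons.prems(1) xR s' by (rule reach.step)
  ultimately have IH: "run G (p # w) s' = run G (w @ [p]) s' \<and> run G (w @ [p]) s' \<noteq> None"
    using Cons.IH Cons.prems(3) \<open>run G w s' \<noteq> None\<close> by simp
  have "run G (p # x # w) s = run G ([p, x] @ w) s" by simp
  also have "\<dots> = run G ([x, p] @ w) s" by (simp only: run_append swap)
  also have "\<dots> = run G (p # w) s'" using xR s' by (simp add: run_append)
  also have "\<dots> = run G ((x # w) @ [p]) s" using IH xR s' by simp
  finally show ?case using IH xR s' by simp
qed

lemma std_dep_run_move_to_front:
  assumes "std_dep G Dstd" and "s \<in> reach G" and "enabled G p s"
    and "\<forall>x\<in>set w1. (x, p) \<notin> Dstd" and "run G w1 s \<noteq> None"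
  shows "run G (p # w1 @ w2) s = run G (w1 @ p # w2) s"
proof -
  have "run G (p # w1) s = run G (w1 @ [p]) s"
    using std_dep_run_Cons_eq_run_snoc[OF assms] by blast
  then show ?thesis
    using run_append[of G "p # w1" w2 s] run_append[of G "w1 @ [p]" w2 s] by simp
qed

lemma persistent_independent_of_disjoint_run:
  assumes "persistent G Dstd P s" and "run G w s \<noteq> None" and "set w \<inter> P = {}"
    and "x \<in> set w" and "p \<in> P"
  shows "(x, p) \<notin> Dstd"
proof -
  obtain k where k: "k < length w" "w ! k = x" using assms(4) by (auto simp: in_set_conv_nth)
  let ?v = "take (Suc k) w"
  have "run G ?v s \<noteq> None"
    using assms(2) run_append_prefix[of G ?v "drop (Suc k) w"] by simp
  moreover have "set ?v \<inter> P = {}" using assms(3) set_take_subset by fast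
  moreover have "?v \<noteq> []" "last ?v = x" using k by (auto simp: take_Suc_conv_app_nth)
  ultimately show ?thesis using assms(1,5) unfolding persistent_def by metis
qed

lemma dep_cov_seq_move_to_front:
  assumes "run G w s \<noteq> None" and "run G (p # w1 @ w2) s \<noteq> None"
    and "w = w1 @ p # w2 \<or> (w = w1 \<and> w2 = [])"
    and "\<forall>x\<in>set w1. (p, x) \<notin> D"
  shows "dep_cov_seq G D s w (p # w1 @ w2)"
proof -
  have "subseq (w1 @ w2) (w1 @ p # w2)"
    by (simp only: subseq_append') (rule list_emb_Cons, rule subseq_order.refl)
  then have "subseq (w1 @ w2) w" using assms(3) by auto
  moreover have "subseq [p, x] w" if "x \<in> set (w1 @ w2)" "(p, x) \<in> D" for x
  proof -
    have "x \<in> set w2" "w = w1 @ p # w2" using assms(3,4) that by auto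
    then show ?thesis by (simp add: subseq_drop_many subseq_singleton_left)
  qed
  ultimately have pairs: "subseq [(p # w1 @ w2) ! i, (p # w1 @ w2) ! j] w"
    if "i < j" "j < length (p # w1 @ w2)" "((p # w1 @ w2) ! i, (p # w1 @ w2) ! j) \<in> D" for i j
    using that by (intro subseq_dependent_pair_Cons) auto
  have "set w \<subseteq> set (p # w1 @ w2)" using assms(3) by auto
  moreover obtain sn sm where "run G w s = Some sn" "run G (p # w1 @ w2) s = Some sm"
    using assms(1,2) by blast
  ultimately show ?thesis
    unfolding dep_cov_seq_def subseq_pair_conv_nth[symmetric] using pairs by blast
qed

lemma split_list_first_in_set_or_disjoint:
  assumes "P \<noteq> {}"
  obtains w1 p w2 where "p \<in> P" "set w1 \<inter> P = {}" "w = w1 @ p # w2 \<or> (w = w1 \<and> w2 = [])"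
proof (cases "\<exists>x\<in>set w. x \<in> P")
  case True
  then show ?thesis using that split_list_first_prop[OF True] by blast
next
  case False
  then show ?thesis using that assms by blast
qed

theorem theorem2:
  fixes G :: "('th::finite,'ev,'l,'g,'tr) esys"
    and PG :: "(('pth,'ev,'l,'g) state, 'ptr) lts"
    and ep :: "'tr \<Rightarrow> 'ptr"
    and Dstd D :: "('tr \<times> 'tr) set"
    and P :: "'tr set"
    and s :: "('th,'ev,'l,'g) state"
  assumes "s \<in> reach G"
    and "std_dep G Dstd"
    and "valid_dep G PG ep D"
    and "D \<subseteq> Dstd"
    and "P \<noteq> {}"
    and "persistent G Dstd P s"
  shows "dep_cov_set G D P s"
  unfolding dep_cov_set_def
proof (intro conjI allI impI)
  show "P \<noteq> {}" by fact
  show P_enabled: "\<forall>p\<in>P. enabled G p s" using assms(6) by (simp add: persistent_def)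
  fix w assume "w \<noteq> []" and "run G w s \<noteq> None"
  obtain w1 p w2 where "p \<in> P" "set w1 \<inter> P = {}" and w: "w = w1 @ p # w2 \<or> (w = w1 \<and> w2 = [])"
    using split_list_first_in_set_or_disjoint[OF assms(5)] by metis
  have "run G w1 s \<noteq> None" using w \<open>run G w s \<noteq> None\<close> by (metis run_append_prefix)
  then have indep: "\<forall>x\<in>set w1. (x, p) \<notin> Dstd"
    using persistent_independent_of_disjoint_run[OF assms(6)] \<open>set w1 \<inter> P = {}\<close> \<open>p \<in> P\<close> by blast
  have "enabled G p s" using P_enabled \<open>p \<in> P\<close> by blast
  from w have "run G (p # w1 @ w2) s \<noteq> None"
  proof
    assume "w = w1 @ p # w2"
    then show ?thesis using std_dep_run_move_to_front[OF assms(2,1) \<open>enabled G p s\<close> indep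
        \<open>run G w1 s \<noteq> None\<close>] \<open>run G w s \<noteq> None\<close> by simp
  next
    assume "w = w1 \<and> w2 = []"
    then show ?thesis using std_dep_run_Cons_eq_run_snoc[OF assms(2,1) \<open>enabled G p s\<close> indep
        \<open>run G w1 s \<noteq> None\<close>] by simp
  qed
  moreover have "sym Dstd" using assms(2) by (simp add: std_dep_def)
  then have "\<forall>x\<in>set w1. (p, x) \<notin> D" using indep assms(4) by (auto dest: symD)
  ultimately have "dep_cov_seq G D s w (p # w1 @ w2)"
    by (intro dep_cov_seq_move_to_front[OF \<open>run G w s \<noteq> None\<close> _ w])
  then show "\<exists>u. u \<noteq> [] \<and> dep_cov_seq G D s w u \<and> hd u \<in> P" using \<open>p \<in> P\<close> by auto
qed

end
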